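(* Let $x,y\in B$ with $|x|=|y|$, $\delta(x)=3$ and $\delta(y)=1$. Then $s([x]_2)<s([y]_2)$.
   Context: Stern's sequence $(a(n))_{n\ge0}$: $a(0)=0$, $a(1)=1$, $a(2n)=a(n)$, $a(2n+1)=a(n)+a(n+1)$; $s(n)=a(n+1)$. For a binary string $x$, $[x]_2$ is the integer it represents in base 2 and $|x|$ its length. $B$ denotes the set of nonempty binary strings that are concatenations of blocks each equal to $10$ or $100$; for $x\in B$, $\delta(x)$ is the number of $0$s minus the number of $1$s in $x$, which equals the number of $100$ blocks. *)

theory Defs
  imports Main
begin

function stern :: "nat \<Rightarrow> nat" where
  "stern n = (if n = 0 then 0 else if n = 1 then 1
              else if even n then stern (n div 2)
              else stern (n div 2) + stern (n div 2 + 1))"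
  by auto
termination by (relation "measure id") (auto elim: oddE)
declare stern.simps[simp del]

definition s :: "nat \<Rightarrow> nat" where "s n = stern (n + 1)"

text \<open>Binary strings as lists of bits, most significant bit first (True = 1).\<close>
definition bin_val :: "bool list \<Rightarrow> nat" where
  "bin_val x = foldl (\<lambda>acc b. 2 * acc + (if b then 1 else 0)) 0 x"

inductive inB :: "bool list \<Rightarrow> bool" where
  blk10: "inB [True, False]"
| blk100: "inB [True, False, False]"
| cons10: "inB x \<Longrightarrow> inB ([True, False] @ x)"
| cons100: "inB x \<Longrightarrow> inB ([True, False, False] @ x)"

definition delta :: "bool list \<Rightarrow> int" where
  "delta x = int (count_list x False) - int (count_list x True)"

end

theory Submission
  imports Defs Complex_Main
begin

text \<open>Reading a binary word from its most significant bit, the pair (stern n, stern (n + 1))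
  evolves by (p, q) \<mapsto> (p + q, q) on a 1 and by (p, q) \<mapsto> (p, p + q) on a 0, so a block 10
  acts as (p, q) \<mapsto> (p + q, p + 2q) and a block 100 as (p, q) \<mapsto> (p + q, 2p + 3q).
  The weight p + \<phi> q is multiplied exactly by \<phi>^2 by a block 10 and, while p / q < 2 / 3
  (which both blocks preserve), by a factor between \<phi> + 2 and 11\<phi> - 14 by a block 100.
  Words of equal length with three resp. one blocks 100 have n resp. n + 3 blocks 10, so their
  weights compare as (11\<phi> - 14)^3 against \<phi>^6 (\<phi> + 2), a margin that survives passing
  from weights back to second components.\<close>

lemma stern_double: "stern (2 * n) = stern n"
  by (cases "n = 0") (simp add: stern.simps, subst stern.simps, simp)

lemma stern_double_Suc: "stern (2 * n + 1) = stern n + stern (n + 1)"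
  by (cases "n = 0") (simp add: stern.simps, subst stern.simps, simp)

fun stern_step :: "nat \<times> nat \<Rightarrow> bool \<Rightarrow> nat \<times> nat" where
  "stern_step (p, q) b = (if b then (p + q, q) else (p, p + q))"

definition stern_run :: "bool list \<Rightarrow> nat \<times> nat \<Rightarrow> nat \<times> nat" where
  "stern_run w v = foldl stern_step v w"

lemma stern_run_bin_val: "stern_run w (0, 1) = (stern (bin_val w), s (bin_val w))"
proof (induction w rule: rev_induct)
  case Nil
  show ?case by (simp add: stern_run_def bin_val_def s_def stern.simps)
next
  case (snoc b w)
  have bin_val_snoc: "bin_val (w @ [b]) = 2 * bin_val w + (if b then 1 else 0)"
    by (simp add: bin_val_def)
  have "stern_run (w @ [b]) (0, 1) = stern_step (stern (bin_val w), stern (bin_val w + 1)) b"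
    using snoc by (simp add: stern_run_def s_def)
  moreover have "stern (2 * bin_val w + 2) = stern (bin_val w + 1)"
    using stern_double[of "bin_val w + 1"] by (simp add: algebra_simps)
  ultimately show ?case
    using stern_double[of "bin_val w"] stern_double_Suc[of "bin_val w"]
    by (simp add: bin_val_snoc s_def)
qed

lemma stern_run_block_10:
  "stern_run (True # False # x) (p, q) = stern_run x (p + q, p + 2 * q)"
  by (simp add: stern_run_def mult_2 add.assoc)

lemma stern_run_block_100:
  "stern_run (True # False # False # x) (p, q) = stern_run x (p + q, 2 * p + 3 * q)"
  by (simp add: stern_run_def eval_nat_numeral ac_simps)

lemma stern_run_ratio_bound:
  assumes "inB x" and "3 * p < 2 * q"
  shows "3 * fst (stern_run x (p, q)) < 2 * snd (stern_run x (p, q))"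
  using assms
proof (induction arbitrary: p q rule: inB.induct)
  case (cons10 x)
  have "3 * (p + q) < 2 * (p + 2 * q)" using cons10.prems by simp
  from cons10.IH[OF this] show ?case by (simp add: stern_run_block_10)
next
  case (cons100 x)
  have "3 * (p + q) < 2 * (2 * p + 3 * q)" using cons100.prems by simp
  from cons100.IH[OF this] show ?case by (simp add: stern_run_block_100)
qed (simp_all add: stern_run_def)

lemma stern_run_snd_le:
  "inB x \<Longrightarrow> snd (stern_run x (p, q)) \<le> 3 * fst (stern_run x (p, q))"
  by (induction arbitrary: p q rule: inB.induct)
    (simp_all add: stern_run_block_10 stern_run_block_100 stern_run_def)

definition blocks_10 :: "bool list \<Rightarrow> nat" where
  "blocks_10 x = 2 * count_list x True - count_list x False"

definition blocks_100 :: "bool list \<Rightarrow> nat" where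
  "blocks_100 x = count_list x False - count_list x True"

lemma inB_count_bounds:
  "inB x \<Longrightarrow>
    count_list x True \<le> count_list x False \<and> count_list x False \<le> 2 * count_list x True"
  by (induction rule: inB.induct) auto

lemma inB_counts:
  assumes "inB x"
  shows "count_list x True = blocks_10 x + blocks_100 x"
    and "count_list x False = blocks_10 x + 2 * blocks_100 x"
  using inB_count_bounds[OF assms] by (auto simp: blocks_10_def blocks_100_def)

lemma blocks_cons_10:
  "inB x \<Longrightarrow> blocks_10 (True # False # x) = Suc (blocks_10 x)"
  "blocks_100 (True # False # x) = blocks_100 x"
  using inB_count_bounds[of x] by (auto simp: blocks_10_def blocks_100_def)

lemma blocks_cons_100:
  "blocks_10 (True # False # False # x) = blocks_10 x"
  "inB x \<Longrightarrow> blocks_100 (True # False # False # x) = Suc (blocks_100 x)"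
  using inB_count_bounds[of x] by (auto simp: blocks_10_def blocks_100_def)

lemma inB_length: "inB x \<Longrightarrow> length x = 2 * blocks_10 x + 3 * blocks_100 x"
proof -
  have "length x = count_list x True + count_list x False"
    by (induction x) auto
  thus "inB x \<Longrightarrow> ?thesis" using inB_counts[of x] by simp
qed

lemma inB_delta: "inB x \<Longrightarrow> delta x = int (blocks_100 x)"
  using inB_counts[of x] by (simp add: delta_def)

definition phi :: real where "phi = (1 + sqrt 5) / 2"

lemma phi_square: "phi\<^sup>2 = phi + 1"
  unfolding phi_def by (simp add: power2_eq_square field_simps)

lemma phi_lower: "3 / 2 \<le> phi"
proof -
  have "2 \<le> sqrt 5"
    by (rule real_le_rsqrt) simp
  thus ?thesis unfolding phi_def by simp
qed

lemma phi_upper: "phi \<le> 13 / 8"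
proof -
  have "sqrt 5 \<le> 9 / 4"
    by (rule real_le_lsqrt) (simp_all add: power2_eq_square)
  thus ?thesis unfolding phi_def by simp
qed

definition phi_weight :: "nat \<times> nat \<Rightarrow> real" where
  "phi_weight v = real (fst v) + phi * real (snd v)"

lemma phi_weight_block_10: "phi_weight (p + q, p + 2 * q) = phi\<^sup>2 * phi_weight (p, q)"
proof -
  have "phi\<^sup>2 * (real p + phi * real q) = (1 + phi) * real p + (2 * phi + 1) * real q"
    using phi_square by algebra
  thus ?thesis unfolding phi_weight_def by (simp add: algebra_simps)
qed

text \<open>The weight ratio of a block 100 is a Moebius function of p / q, increasing from
  \<phi> + 2 at p = 0 to (5 + 13\<phi>) / (2 + 3\<phi>) = 11\<phi> - 14 at p / q = 2 / 3.\<close>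

lemma phi_weight_block_100_upper:
  assumes "3 * p \<le> 2 * q"
  shows "phi_weight (p + q, 2 * p + 3 * q) \<le> (11 * phi - 14) * phi_weight (p, q)"
proof -
  have "(11 * phi - 14) * (real p + phi * real q) - (real (p + q) + phi * real (2 * p + 3 * q))
      = (5 - 3 * phi) * (2 * real q - 3 * real p)"
    using phi_square by simp algebra
  moreover have "0 \<le> (5 - 3 * phi) * (2 * real q - 3 * real p)"
    using phi_upper assms by (intro mult_nonneg_nonneg) linarith+
  ultimately show ?thesis unfolding phi_weight_def by simp
qed

lemma phi_weight_block_100_lower:
  "(phi + 2) * phi_weight (p, q) \<le> phi_weight (p + q, 2 * p + 3 * q)"
proof -
  have "real (p + q) + phi * real (2 * p + 3 * q) - (phi + 2) * (real p + phi * real q)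
      = (phi - 1) * real p"
    using phi_square by simp algebra
  moreover have "0 \<le> (phi - 1) * real p"
    using phi_lower by simp
  ultimately show ?thesis unfolding phi_weight_def by simp
qed

lemma phi_weight_stern_run_upper:
  assumes "inB x" and "3 * p < 2 * q"
  shows "phi_weight (stern_run x (p, q))
    \<le> (phi\<^sup>2) ^ blocks_10 x * (11 * phi - 14) ^ blocks_100 x * phi_weight (p, q)"
  using assms
proof (induction arbitrary: p q rule: inB.induct)
  case blk10
  show ?case using phi_weight_block_10
    by (simp add: stern_run_def blocks_10_def blocks_100_def mult_2 add.assoc)
next
  case blk100
  show ?case using phi_weight_block_100_upper[of p q] blk100
    by (simp add: stern_run_def blocks_10_def blocks_100_def eval_nat_numeral ac_simps)
next
  case (cons10 x)
  have "3 * (p + q) < 2 * (p + 2 * q)" using cons10.prems by simp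
  have "phi_weight (stern_run ([True, False] @ x) (p, q))
      = phi_weight (stern_run x (p + q, p + 2 * q))"
    by (simp add: stern_run_block_10)
  also have "\<dots> \<le> (phi\<^sup>2) ^ blocks_10 x * (11 * phi - 14) ^ blocks_100 x
      * phi_weight (p + q, p + 2 * q)"
    using cons10.IH[OF \<open>3 * (p + q) < 2 * (p + 2 * q)\<close>] .
  also have "\<dots> = (phi\<^sup>2) ^ blocks_10 ([True, False] @ x)
      * (11 * phi - 14) ^ blocks_100 ([True, False] @ x) * phi_weight (p, q)"
    by (simp add: blocks_cons_10 cons10.hyps phi_weight_block_10)
  finally show ?case .
next
  case (cons100 x)
  have "3 * (p + q) < 2 * (2 * p + 3 * q)" using cons100.prems by simp
  have factor_nonneg: "0 \<le> (phi\<^sup>2) ^ blocks_10 x * (11 * phi - 14) ^ blocks_100 x"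
    using phi_lower phi_upper by simp
  have "phi_weight (stern_run ([True, False, False] @ x) (p, q))
      = phi_weight (stern_run x (p + q, 2 * p + 3 * q))"
    by (simp add: stern_run_block_100)
  also have "\<dots> \<le> (phi\<^sup>2) ^ blocks_10 x * (11 * phi - 14) ^ blocks_100 x
      * phi_weight (p + q, 2 * p + 3 * q)"
    using cons100.IH[OF \<open>3 * (p + q) < 2 * (2 * p + 3 * q)\<close>] .
  also have "\<dots> \<le> (phi\<^sup>2) ^ blocks_10 x * (11 * phi - 14) ^ blocks_100 x
      * ((11 * phi - 14) * phi_weight (p, q))"
    using cons100.prems by (intro mult_left_mono[OF phi_weight_block_100_upper factor_nonneg]) simp
  also have "\<dots> = (phi\<^sup>2) ^ blocks_10 ([True, False, False] @ x)
      * (11 * phi - 14) ^ blocks_100 ([True, False, False] @ x) * phi_weight (p, q)"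
    by (simp add: blocks_cons_100 cons100.hyps)
  finally show ?case .
qed

lemma phi_weight_stern_run_lower:
  assumes "inB x"
  shows "(phi\<^sup>2) ^ blocks_10 x * (phi + 2) ^ blocks_100 x * phi_weight (p, q)
    \<le> phi_weight (stern_run x (p, q))"
  using assms
proof (induction arbitrary: p q rule: inB.induct)
  case blk10
  show ?case using phi_weight_block_10
    by (simp add: stern_run_def blocks_10_def blocks_100_def mult_2 add.assoc)
next
  case blk100
  show ?case using phi_weight_block_100_lower[of p q]
    by (simp add: stern_run_def blocks_10_def blocks_100_def eval_nat_numeral ac_simps)
next
  case (cons10 x)
  have "(phi\<^sup>2) ^ blocks_10 ([True, False] @ x) * (phi + 2) ^ blocks_100 ([True, False] @ x)
      * phi_weight (p, q)
      = (phi\<^sup>2) ^ blocks_10 x * (phi + 2) ^ blocks_100 x * phi_weight (p + q, p + 2 * q)"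
    by (simp add: blocks_cons_10 cons10.hyps phi_weight_block_10)
  also have "\<dots> \<le> phi_weight (stern_run x (p + q, p + 2 * q))"
    by (rule cons10.IH)
  finally show ?case by (simp add: stern_run_block_10)
next
  case (cons100 x)
  have factor_nonneg: "0 \<le> (phi\<^sup>2) ^ blocks_10 x * (phi + 2) ^ blocks_100 x"
    using phi_lower by simp
  have "(phi\<^sup>2) ^ blocks_10 ([True, False, False] @ x)
      * (phi + 2) ^ blocks_100 ([True, False, False] @ x) * phi_weight (p, q)
      = (phi\<^sup>2) ^ blocks_10 x * (phi + 2) ^ blocks_100 x * ((phi + 2) * phi_weight (p, q))"
    by (simp add: blocks_cons_100 cons100.hyps)
  also have "\<dots> \<le> (phi\<^sup>2) ^ blocks_10 x * (phi + 2) ^ blocks_100 x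
      * phi_weight (p + q, 2 * p + 3 * q)"
    by (intro mult_left_mono[OF phi_weight_block_100_lower factor_nonneg])
  also have "\<dots> \<le> phi_weight (stern_run x (p + q, 2 * p + 3 * q))"
    by (rule cons100.IH)
  finally show ?case by (simp add: stern_run_block_100)
qed

lemma mult_snd_le_phi_weight:
  "q \<le> 3 * p \<Longrightarrow> (1 + 3 * phi) * real q \<le> 3 * phi_weight (p, q)"
  unfolding phi_weight_def by (simp add: algebra_simps)

lemma phi_weight_less_mult_snd:
  "3 * p < 2 * q \<Longrightarrow> 3 * phi_weight (p, q) < (2 + 3 * phi) * real q"
  unfolding phi_weight_def by (simp add: algebra_simps)

lemma s_bin_val_upper:
  assumes "inB x"
  shows "(1 + 3 * phi) * real (s (bin_val x))
    \<le> 3 * phi * (phi\<^sup>2) ^ blocks_10 x * (11 * phi - 14) ^ blocks_100 x"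
proof -
  obtain p q where run: "stern_run x (0, 1) = (p, q)" and q: "q = s (bin_val x)"
    using stern_run_bin_val by simp
  have "q \<le> 3 * p"
    using stern_run_snd_le[OF assms, of 0 1] unfolding run by simp
  moreover have "phi_weight (p, q) \<le> (phi\<^sup>2) ^ blocks_10 x * (11 * phi - 14) ^ blocks_100 x * phi"
    using phi_weight_stern_run_upper[OF assms, of 0 1] unfolding run by (simp add: phi_weight_def)
  ultimately show ?thesis
    using mult_snd_le_phi_weight[of q p] unfolding q by (simp add: mult_ac)
qed

lemma s_bin_val_lower:
  assumes "inB x"
  shows "3 * phi * (phi\<^sup>2) ^ blocks_10 x * (phi + 2) ^ blocks_100 x
    < (2 + 3 * phi) * real (s (bin_val x))"
proof -
  obtain p q where run: "stern_run x (0, 1) = (p, q)" and q: "q = s (bin_val x)"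
    using stern_run_bin_val by simp
  have "3 * p < 2 * q"
    using stern_run_ratio_bound[OF assms, of 0 1] unfolding run by simp
  moreover have "(phi\<^sup>2) ^ blocks_10 x * (phi + 2) ^ blocks_100 x * phi \<le> phi_weight (p, q)"
    using phi_weight_stern_run_lower[OF assms, of 0 1] unfolding run by (simp add: phi_weight_def)
  ultimately show ?thesis
    using phi_weight_less_mult_snd[of p q] unfolding q by (simp add: mult_ac)
qed

lemma block_factor_inequality:
  "(11 * phi - 14) ^ 3 * (2 + 3 * phi) \<le> (phi\<^sup>2) ^ 3 * (phi + 2) * (1 + 3 * phi)"
proof -
  have "(11 * phi - 14) ^ 3 * (2 + 3 * phi) = 755 * phi - 846"
    and "(phi\<^sup>2) ^ 3 * (phi + 2) * (1 + 3 * phi) = 170 * phi + 105"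
    using phi_square by algebra+
  thus ?thesis using phi_upper by simp
qed

theorem mainTheorem12:
  assumes "inB x" and "inB y" and "length x = length y"
    and "delta x = 3" and "delta y = 1"
  shows "s (bin_val x) < s (bin_val y)"
proof -
  define n where "n = blocks_10 x"
  have blocks: "blocks_100 x = 3" "blocks_100 y = 1" "blocks_10 y = n + 3"
    using assms inB_delta inB_length unfolding n_def by auto
  define K where "K = 3 * phi * (phi\<^sup>2) ^ n"
  have "0 \<le> K" using phi_lower unfolding K_def by simp
  have "(2 + 3 * phi) * ((1 + 3 * phi) * real (s (bin_val x)))
      \<le> (2 + 3 * phi) * (K * (11 * phi - 14) ^ 3)"
    using s_bin_val_upper[OF assms(1)] phi_lower by (simp add: blocks K_def n_def)
  also have "\<dots> \<le> K * ((phi\<^sup>2) ^ 3 * (phi + 2) * (1 + 3 * phi))"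
    using block_factor_inequality \<open>0 \<le> K\<close> by (simp add: mult_left_mono mult_ac)
  also have "\<dots> < (1 + 3 * phi) * ((2 + 3 * phi) * real (s (bin_val y)))"
    using s_bin_val_lower[OF assms(2)] phi_lower by (simp add: blocks K_def power_add mult_ac)
  finally show ?thesis
    using phi_lower by (simp add: mult_ac)
qed

end
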